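(* Under assumptions (A2) and (A3) below: (i) the mixing time of the Markov chain $MC_0$ is at most $2\eta^2$; (ii) the mixing time of $MC_1$ is at most $2\eta^2$; (iii) the mixing times of $MC_{2,odd}$ and $MC_{2,even}$ are both at most $\eta^2+1$.
   Context: Block MDP: finite $\mathcal S$ ($|\mathcal S|=S$), $\mathcal X$ ($|\mathcal X|=n$), $\mathcal A$ ($|\mathcal A|=A$), initial context distribution $\mu$, latent transitions $p$, decoding $f$, emissions $q(\cdot|s)$ supported on $f^{-1}(s)$, with $|f^{-1}(s)|=\alpha_sn$, $\alpha_s>0$, $\sum_s\alpha_s=1$; $P(y|x,a)=q(y|f(y))p(f(y)|f(x),a)$; behavior policy $\pi(a|x)$. (A2): there is $\eta>1$ with $\alpha_{s_1}/\alpha_{s_2}\le\eta$; $p(s_2|s_1,a)/p(s_3|s_1,a)\le\eta$, $p(s_1|s_2,a)/p(s_1|s_3,a)\le\eta$; $q(x|s)/q(y|s)\le\eta$ for $x,y\in f^{-1}(s)$; $\pi(a_1|x)/\pi(a_2|y)\le\eta$. (A3): $\mu(x)=1/n$. Chains: $MC_0$ on $\mathcal X$ with kernel $P_0(y|x)=\sum_a\pi(a|x)P(y|x,a)$ and initial distribution $\mu$. $MC_1$ on $\mathcal A\times\mathcal X$ with kernel $P_1((b,y)|(a,x))=\pi(b|x)P(y|x,b)$ and initial distribution $\mu_1(a,x)=\sum_y\mu(y)\pi(a|y)P(x|y,a)$. $MC_{2,odd}$ and $MC_{2,even}$ on $\mathcal X\times\mathcal A\times\mathcal X$ share the kernel $P_2^2((y,b,y')|(x,a,x'))=\sum_{\tilde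 a}\pi(b|y)P(y'|y,b)\pi(\tilde a|x')P(y|x',\tilde a)$, with initial distributions $\mu_{2,odd}(x,a,x')=\mu(x)\pi(a|x)P(x'|x,a)$ and $\mu_{2,even}(x,a,x')=\sum_{y,b}\mu(y)\pi(b|y)P(x|y,b)\pi(a|x)P(x'|x,a)$. For an irreducible aperiodic chain with initial distribution $\nu$, kernel $Q$ and stationary distribution $\Pi$, the mixing time is $\inf\{h\ge1:d_{TV}(\nu Q^h,\Pi)\le1/4\}$. *)

theory Defs
  imports Complex_Main
begin

text \<open>A kernel Q on a finite state type is a function Q x y = Q(y|x).
  A distribution is a function nu :: 'st => real.\<close>

definition mc_step :: "('st::finite \<Rightarrow> real) \<Rightarrow> ('st \<Rightarrow> 'st \<Rightarrow> real) \<Rightarrow> ('st \<Rightarrow> real)" where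
  "mc_step \<nu> Q = (\<lambda>y. \<Sum>x\<in>UNIV. \<nu> x * Q x y)"

definition mc_dist :: "('st::finite \<Rightarrow> real) \<Rightarrow> ('st \<Rightarrow> 'st \<Rightarrow> real) \<Rightarrow> nat \<Rightarrow> ('st \<Rightarrow> real)" where
  "mc_dist \<nu> Q h = ((\<lambda>\<mu>. mc_step \<mu> Q) ^^ h) \<nu>"

definition d_TV :: "('st::finite \<Rightarrow> real) \<Rightarrow> ('st \<Rightarrow> real) \<Rightarrow> real" where
  "d_TV \<nu> \<Pi> = (1/2) * (\<Sum>x\<in>UNIV. \<bar>\<nu> x - \<Pi> x\<bar>)"

definition stationary_dist :: "('st::finite \<Rightarrow> 'st \<Rightarrow> real) \<Rightarrow> ('st \<Rightarrow> real) \<Rightarrow> bool" where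
  "stationary_dist Q \<Pi> \<longleftrightarrow> (\<forall>x. 0 \<le> \<Pi> x) \<and> (\<Sum>x\<in>UNIV. \<Pi> x) = 1 \<and> mc_step \<Pi> Q = \<Pi>"

text \<open>The set defining the mixing time is nonempty (so the infimum is attained).\<close>
definition mixing_time_finite :: "('st::finite \<Rightarrow> real) \<Rightarrow> ('st \<Rightarrow> 'st \<Rightarrow> real) \<Rightarrow> ('st \<Rightarrow> real) \<Rightarrow> bool" where
  "mixing_time_finite \<nu> Q \<Pi> \<longleftrightarrow> (\<exists>h\<ge>1. d_TV (mc_dist \<nu> Q h) \<Pi> \<le> 1/4)"

definition mixing_time :: "('st::finite \<Rightarrow> real) \<Rightarrow> ('st \<Rightarrow> 'st \<Rightarrow> real) \<Rightarrow> ('st \<Rightarrow> real) \<Rightarrow> nat" where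
  "mixing_time \<nu> Q \<Pi> = (LEAST h. 1 \<le> h \<and> d_TV (mc_dist \<nu> Q h) \<Pi> \<le> 1/4)"

text \<open>p s a s' = p(s'|s,a);  q s x = q(x|s);  pi x a = pi(a|x); P_bmdp x a y = P(y|x,a).\<close>

definition P_bmdp :: "('x \<Rightarrow> 's) \<Rightarrow> ('s \<Rightarrow> 'a \<Rightarrow> 's \<Rightarrow> real) \<Rightarrow> ('s \<Rightarrow> 'x \<Rightarrow> real) \<Rightarrow> 'x \<Rightarrow> 'a \<Rightarrow> 'x \<Rightarrow> real" where
  "P_bmdp f p q x a y = q (f y) y * p (f x) a (f y)"

definition alpha :: "('x::finite \<Rightarrow> 's) \<Rightarrow> 's \<Rightarrow> real" where
  "alpha f s = real (card {x. f x = s}) / real (card (UNIV :: 'x set))"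

definition P0 :: "('x::finite \<Rightarrow> 's) \<Rightarrow> ('s \<Rightarrow> 'a::finite \<Rightarrow> 's \<Rightarrow> real) \<Rightarrow> ('s \<Rightarrow> 'x \<Rightarrow> real) \<Rightarrow> ('x \<Rightarrow> 'a \<Rightarrow> real) \<Rightarrow> 'x \<Rightarrow> 'x \<Rightarrow> real" where
  "P0 f p q \<pi> x y = (\<Sum>a\<in>UNIV. \<pi> x a * P_bmdp f p q x a y)"

definition P1 :: "('x::finite \<Rightarrow> 's) \<Rightarrow> ('s \<Rightarrow> 'a::finite \<Rightarrow> 's \<Rightarrow> real) \<Rightarrow> ('s \<Rightarrow> 'x \<Rightarrow> real) \<Rightarrow> ('x \<Rightarrow> 'a \<Rightarrow> real) \<Rightarrow> ('a \<times> 'x) \<Rightarrow> ('a \<times> 'x) \<Rightarrow> real" where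
  "P1 f p q \<pi> ax by' = (case ax of (a, x) \<Rightarrow> case by' of (b, y) \<Rightarrow> \<pi> x b * P_bmdp f p q x b y)"

definition mu1 :: "('x::finite \<Rightarrow> 's) \<Rightarrow> ('s \<Rightarrow> 'a::finite \<Rightarrow> 's \<Rightarrow> real) \<Rightarrow> ('s \<Rightarrow> 'x \<Rightarrow> real) \<Rightarrow> ('x \<Rightarrow> 'a \<Rightarrow> real) \<Rightarrow> ('x \<Rightarrow> real) \<Rightarrow> ('a \<times> 'x) \<Rightarrow> real" where
  "mu1 f p q \<pi> \<mu> ax = (case ax of (a, x) \<Rightarrow> \<Sum>y\<in>UNIV. \<mu> y * \<pi> y a * P_bmdp f p q y a x)"

definition P2sq :: "('x::finite \<Rightarrow> 's) \<Rightarrow> ('s \<Rightarrow> 'a::finite \<Rightarrow> 's \<Rightarrow> real) \<Rightarrow> ('s \<Rightarrow> 'x \<Rightarrow> real) \<Rightarrow> ('x \<Rightarrow> 'a \<Rightarrow> real) \<Rightarrow> ('x \<times> 'a \<times> 'x) \<Rightarrow> ('x \<times> 'a \<times> 'x) \<Rightarrow> real" where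
  "P2sq f p q \<pi> s t = (case s of (x, a, x') \<Rightarrow> case t of (y, b, y') \<Rightarrow>
      (\<Sum>a'\<in>UNIV. \<pi> y b * P_bmdp f p q y b y' * \<pi> x' a' * P_bmdp f p q x' a' y))"

definition mu2odd :: "('x::finite \<Rightarrow> 's) \<Rightarrow> ('s \<Rightarrow> 'a::finite \<Rightarrow> 's \<Rightarrow> real) \<Rightarrow> ('s \<Rightarrow> 'x \<Rightarrow> real) \<Rightarrow> ('x \<Rightarrow> 'a \<Rightarrow> real) \<Rightarrow> ('x \<Rightarrow> real) \<Rightarrow> ('x \<times> 'a \<times> 'x) \<Rightarrow> real" where
  "mu2odd f p q \<pi> \<mu> s = (case s of (x, a, x') \<Rightarrow> \<mu> x * \<pi> x a * P_bmdp f p q x a x')"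

definition mu2even :: "('x::finite \<Rightarrow> 's) \<Rightarrow> ('s \<Rightarrow> 'a::finite \<Rightarrow> 's \<Rightarrow> real) \<Rightarrow> ('s \<Rightarrow> 'x \<Rightarrow> real) \<Rightarrow> ('x \<Rightarrow> 'a \<Rightarrow> real) \<Rightarrow> ('x \<Rightarrow> real) \<Rightarrow> ('x \<times> 'a \<times> 'x) \<Rightarrow> real" where
  "mu2even f p q \<pi> \<mu> s = (case s of (x, a, x') \<Rightarrow>
      (\<Sum>y\<in>UNIV. \<Sum>b\<in>UNIV. \<mu> y * \<pi> y b * P_bmdp f p q y b x) * \<pi> x a * P_bmdp f p q x a x')"

end

theory Submission
  imports Defs
begin

text \<open>If all rows of a stochastic kernel Q are pointwise comparable, Q x y \<le> c * Q x' y, then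
  the positive and negative parts of a signed vector of total mass zero are mapped to vectors that
  are again within a factor c of each other, so Q contracts total variation by (c - 1) / (c + 1).
  Hence after h \<ge> max c 2 steps the distance to any stationary distribution is at most
  ((c - 1) / (c + 1))^h \<le> 1/4, and the mixing time is at most c + 1. Under (A2) the kernels of
  MC_0, MC_1 and the two-step kernel of MC_2 have comparable rows with c = \<eta>^2: each depends on
  the current state x only through a factor \<pi>(a|x) p(s'|f x, a).\<close>

definition stochastic :: "('st::finite \<Rightarrow> 'st \<Rightarrow> real) \<Rightarrow> bool" where
  "stochastic Q \<longleftrightarrow> (\<forall>x y. 0 \<le> Q x y) \<and> (\<forall>x. (\<Sum>y\<in>UNIV. Q x y) = 1)"

definition prob_vector :: "('st::finite \<Rightarrow> real) \<Rightarrow> bool" where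
  "prob_vector \<nu> \<longleftrightarrow> (\<forall>x. 0 \<le> \<nu> x) \<and> (\<Sum>x\<in>UNIV. \<nu> x) = 1"

definition comparable_rows :: "real \<Rightarrow> ('st \<Rightarrow> 'st \<Rightarrow> real) \<Rightarrow> bool" where
  "comparable_rows c Q \<longleftrightarrow> (\<forall>x x' y. Q x y \<le> c * Q x' y)"

lemma sum_UNIV_prod:
  "(\<Sum>z\<in>(UNIV :: ('u::finite \<times> 'v::finite) set). g z) = (\<Sum>a\<in>UNIV. \<Sum>b\<in>UNIV. g (a, b))"
  unfolding sum.cartesian_product by (simp add: case_prod_beta')

lemma mc_dist_0 [simp]: "mc_dist \<nu> Q 0 = \<nu>"
  by (simp add: mc_dist_def)

lemma mc_dist_Suc [simp]: "mc_dist \<nu> Q (Suc h) = mc_step (mc_dist \<nu> Q h) Q"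
  by (simp add: mc_dist_def)

lemma sum_mc_step:
  assumes "stochastic Q"
  shows "(\<Sum>y\<in>UNIV. mc_step \<nu> Q y) = (\<Sum>x\<in>UNIV. \<nu> x)"
  using assms unfolding mc_step_def stochastic_def
  by (subst sum.swap) (simp add: sum_distrib_left[symmetric])

lemma prob_vector_mc_step:
  assumes "stochastic Q" and "prob_vector \<nu>"
  shows "prob_vector (mc_step \<nu> Q)"
  using assms sum_mc_step[OF assms(1)]
  by (auto simp: prob_vector_def stochastic_def mc_step_def intro!: sum_nonneg)

lemma d_TV_le_1:
  assumes "prob_vector \<nu>" and "prob_vector \<Pi>"
  shows "d_TV \<nu> \<Pi> \<le> 1"
proof -
  have "(\<Sum>x\<in>UNIV. \<bar>\<nu> x - \<Pi> x\<bar>) \<le> (\<Sum>x\<in>UNIV. \<nu> x + \<Pi> x)"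
    using assms by (intro sum_mono) (force simp: prob_vector_def abs_if)
  also have "\<dots> = 2"
    using assms by (simp add: sum.distrib prob_vector_def)
  finally show ?thesis
    by (simp add: d_TV_def)
qed

lemma comparable_rows_weighted_le:
  assumes "\<And>x y. 0 \<le> Q x y" and "comparable_rows c Q" and "0 \<le> c"
    and "\<And>x. 0 \<le> u x" and "\<And>x. 0 \<le> v x"
    and "(\<Sum>x\<in>UNIV. u x) = (\<Sum>x\<in>UNIV. v x)"
  shows "(\<Sum>x\<in>UNIV. u x * Q x y) \<le> c * (\<Sum>x\<in>(UNIV :: 'st::finite set). v x * Q x y)"
proof -
  define m where "m = Min (range (\<lambda>x. Q x y))"
  have "m \<in> range (\<lambda>x. Q x y)"
    unfolding m_def by (rule Min_in) auto
  then obtain x0 where m_eq: "m = Q x0 y"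
    by auto
  have "(\<Sum>x\<in>UNIV. u x * Q x y) \<le> (\<Sum>x\<in>UNIV. u x * (c * m))"
    using assms(2,4) by (intro sum_mono mult_left_mono) (auto simp: comparable_rows_def m_eq)
  also have "\<dots> = c * (\<Sum>x\<in>UNIV. v x * m)"
    using assms(6) by (simp add: sum_distrib_left[symmetric] sum_distrib_right[symmetric] mult.commute)
  also have "\<dots> \<le> c * (\<Sum>x\<in>UNIV. v x * Q x y)"
    using assms(3,5) by (intro mult_left_mono sum_mono) (auto simp: m_def)
  finally show ?thesis .
qed

lemma l1_norm_contraction_comparable_rows:
  assumes Q: "stochastic Q" and cmp: "comparable_rows c Q" and c: "1 \<le> c"
    and d_sum: "(\<Sum>x\<in>UNIV. d x) = 0"
  shows "(\<Sum>y\<in>UNIV. \<bar>\<Sum>x\<in>UNIV. d x * Q x y\<bar>)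
    \<le> (c - 1) / (c + 1) * (\<Sum>x\<in>(UNIV :: 'st::finite set). \<bar>d x\<bar>)"
proof -
  define dp where "dp x = max (d x) 0" for x
  define dm where "dm x = max (- d x) 0" for x
  have dp_nonneg: "0 \<le> dp x" and dm_nonneg: "0 \<le> dm x" for x
    by (auto simp: dp_def dm_def)
  have d_eq: "d x = dp x - dm x" and abs_d_eq: "\<bar>d x\<bar> = dp x + dm x" for x
    by (auto simp: dp_def dm_def)
  have mass_eq: "(\<Sum>x\<in>UNIV. dp x) = (\<Sum>x\<in>UNIV. dm x)"
    using d_sum by (simp add: d_eq sum_subtractf)
  have Q_nonneg: "0 \<le> Q x y" for x y
    using Q by (simp add: stochastic_def)
  define A where "A y = (\<Sum>x\<in>UNIV. dp x * Q x y)" for y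
  define B where "B y = (\<Sum>x\<in>UNIV. dm x * Q x y)" for y
  have pointwise: "\<bar>A y - B y\<bar> \<le> (c - 1) / (c + 1) * (A y + B y)" for y
  proof -
    have "A y \<le> c * B y" "B y \<le> c * A y"
      unfolding A_def B_def using c mass_eq
      by (auto intro!: comparable_rows_weighted_le[OF _ cmp] simp: Q_nonneg dp_nonneg dm_nonneg)
    moreover have "0 \<le> A y" "0 \<le> B y"
      unfolding A_def B_def by (auto intro!: sum_nonneg simp: Q_nonneg dp_nonneg dm_nonneg)
    ultimately have "(c + 1) * \<bar>A y - B y\<bar> \<le> (c - 1) * (A y + B y)"
      by (auto simp: abs_if algebra_simps)
    then show ?thesis
      using c by (simp add: field_simps)
  qed
  have "(\<Sum>y\<in>UNIV. \<bar>\<Sum>x\<in>UNIV. d x * Q x y\<bar>) = (\<Sum>y\<in>UNIV. \<bar>A y - B y\<bar>)"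
    by (simp add: A_def B_def d_eq left_diff_distrib sum_subtractf)
  also have "\<dots> \<le> (c - 1) / (c + 1) * (\<Sum>y\<in>UNIV. A y + B y)"
    unfolding sum_distrib_left by (intro sum_mono pointwise)
  also have "(\<Sum>y\<in>UNIV. A y + B y) = (\<Sum>x\<in>UNIV. \<bar>d x\<bar>)"
    using Q unfolding A_def B_def stochastic_def
    by (simp add: abs_d_eq sum.distrib[symmetric] distrib_right[symmetric] sum.swap[of _ UNIV]
        sum_distrib_left[symmetric])
  finally show ?thesis .
qed

lemma d_TV_mc_step_le:
  assumes "stochastic Q" and "comparable_rows c Q" and "1 \<le> c"
    and "(\<Sum>x\<in>UNIV. \<mu> x) = (\<Sum>x\<in>UNIV. \<nu> x)"
  shows "d_TV (mc_step \<mu> Q) (mc_step \<nu> Q) \<le> (c - 1) / (c + 1) * d_TV \<mu> \<nu>"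
proof -
  have "(\<Sum>y\<in>UNIV. \<bar>mc_step \<mu> Q y - mc_step \<nu> Q y\<bar>)
      = (\<Sum>y\<in>UNIV. \<bar>\<Sum>x\<in>UNIV. (\<mu> x - \<nu> x) * Q x y\<bar>)"
    by (simp add: mc_step_def left_diff_distrib sum_subtractf)
  also have "\<dots> \<le> (c - 1) / (c + 1) * (\<Sum>x\<in>UNIV. \<bar>\<mu> x - \<nu> x\<bar>)"
    using assms by (intro l1_norm_contraction_comparable_rows) (simp_all add: sum_subtractf)
  finally show ?thesis
    unfolding d_TV_def mult.left_commute[of "(c - 1) / (c + 1)"] by (intro mult_left_mono) auto
qed

lemma d_TV_mc_dist_le:
  assumes Q: "stochastic Q" and cmp: "comparable_rows c Q" and c: "1 \<le> c"
    and \<nu>: "prob_vector \<nu>" and \<Pi>: "stationary_dist Q \<Pi>"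
  shows "d_TV (mc_dist \<nu> Q h) \<Pi> \<le> ((c - 1) / (c + 1)) ^ h"
proof (induction h)
  case 0
  show ?case
    using \<nu> \<Pi> by (simp add: d_TV_le_1 stationary_dist_def prob_vector_def)
next
  case (Suc h)
  have "prob_vector (mc_dist \<nu> Q h)"
    by (induction h) (simp_all add: \<nu> prob_vector_mc_step[OF Q])
  then have "d_TV (mc_step (mc_dist \<nu> Q h) Q) (mc_step \<Pi> Q)
      \<le> (c - 1) / (c + 1) * d_TV (mc_dist \<nu> Q h) \<Pi>"
    using \<Pi> by (intro d_TV_mc_step_le[OF Q cmp c]) (simp add: prob_vector_def stationary_dist_def)
  also have "\<dots> \<le> (c - 1) / (c + 1) * ((c - 1) / (c + 1)) ^ h"
    using Suc c by (intro mult_left_mono) auto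
  finally show ?case
    using \<Pi> by (simp add: stationary_dist_def)
qed

lemma one_plus_power_ge_quadratic:
  fixes u :: real
  assumes "0 \<le> u"
  shows "1 + real h * u + real h * (real h - 1) / 2 * u\<^sup>2 \<le> (1 + u) ^ h"
proof (induction h)
  case 0
  show ?case by simp
next
  case (Suc h)
  have "0 \<le> real h * (real h - 1) / 2 * u ^ 3"
    using assms by (cases h) auto
  then have "1 + real (Suc h) * u + real (Suc h) * (real (Suc h) - 1) / 2 * u\<^sup>2
      \<le> (1 + u) * (1 + real h * u + real h * (real h - 1) / 2 * u\<^sup>2)"
    by (simp add: field_simps power2_eq_square power3_eq_cube)
  also have "\<dots> \<le> (1 + u) ^ Suc h"
    using Suc assms by (simp add: mult_left_mono)
  finally show ?case .
qed

lemma contraction_factor_power_le: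
  fixes c :: real
  assumes c: "1 < c" and h: "c \<le> real h" "2 \<le> h"
  shows "((c - 1) / (c + 1)) ^ h \<le> 1 / 4"
proof -
  define u where "u = 2 / (c - 1)"
  have u: "0 < u" and factor_eq: "(c - 1) / (c + 1) = 1 / (1 + u)"
    using c by (simp_all add: u_def field_simps)
  have "2 \<le> real h * u" "2 \<le> (real h - 1) * u"
    using c h by (simp_all add: u_def field_simps)
  then have "2 \<le> (real h * u) * ((real h - 1) * u) / 2"
    using mult_mono[of 2 "real h * u" 2 "(real h - 1) * u"] by simp
  then have "4 \<le> (1 + u) ^ h"
    using one_plus_power_ge_quadratic[of u h] u \<open>2 \<le> real h * u\<close>
    by (simp add: power2_eq_square mult_ac)
  then have "1 / (1 + u) ^ h \<le> 1 / 4"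
    by (simp add: field_simps)
  then show ?thesis
    by (simp add: factor_eq power_one_over)
qed

lemma mixing_time_le:
  assumes "1 \<le> h" and "d_TV (mc_dist \<nu> Q h) \<Pi> \<le> 1 / 4"
  shows "mixing_time_finite \<nu> Q \<Pi> \<and> mixing_time \<nu> Q \<Pi> \<le> h"
  using assms unfolding mixing_time_finite_def mixing_time_def by (auto intro: Least_le)

lemma mixing_time_comparable_rows:
  assumes Q: "stochastic Q" and cmp: "comparable_rows c Q" and c: "1 < c"
    and \<nu>: "prob_vector \<nu>" and \<Pi>: "stationary_dist Q \<Pi>"
  shows "mixing_time_finite \<nu> Q \<Pi> \<and> real (mixing_time \<nu> Q \<Pi>) \<le> c + 1"
proof -
  define h where "h = nat \<lfloor>c\<rfloor> + 1"
  have h: "c \<le> real h" "2 \<le> h" "real h \<le> c + 1"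
    using c by (simp_all add: h_def) linarith+
  have "d_TV (mc_dist \<nu> Q h) \<Pi> \<le> ((c - 1) / (c + 1)) ^ h"
    using c by (intro d_TV_mc_dist_le[OF Q cmp _ \<nu> \<Pi>]) simp
  also have "\<dots> \<le> 1 / 4"
    using c h by (intro contraction_factor_power_le)
  finally have "mixing_time_finite \<nu> Q \<Pi> \<and> mixing_time \<nu> Q \<Pi> \<le> h"
    using h by (intro mixing_time_le) auto
  then show ?thesis
    using h by linarith
qed

locale block_mdp =
  fixes f :: "'x::finite \<Rightarrow> 's::finite"
    and p :: "'s \<Rightarrow> 'a::finite \<Rightarrow> 's \<Rightarrow> real"
    and q :: "'s \<Rightarrow> 'x \<Rightarrow> real"
    and \<pi> :: "'x \<Rightarrow> 'a \<Rightarrow> real"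
  assumes p_nonneg: "\<And>s a s'. 0 \<le> p s a s'"
    and p_sum: "\<And>s a. (\<Sum>s'\<in>UNIV. p s a s') = 1"
    and q_nonneg: "\<And>s x. 0 \<le> q s x"
    and q_sum: "\<And>s. (\<Sum>x\<in>UNIV. q s x) = 1"
    and q_supp: "\<And>s x. f x \<noteq> s \<Longrightarrow> q s x = 0"
    and pi_nonneg: "\<And>x a. 0 \<le> \<pi> x a"
    and pi_sum: "\<And>x. (\<Sum>a\<in>UNIV. \<pi> x a) = 1"
begin

abbreviation P :: "'x \<Rightarrow> 'a \<Rightarrow> 'x \<Rightarrow> real" where
  "P \<equiv> P_bmdp f p q"

lemma P_nonneg: "0 \<le> P x a y"
  by (simp add: P_bmdp_def q_nonneg p_nonneg)

lemma sum_P: "(\<Sum>y\<in>UNIV. P x a y) = 1"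
proof -
  have "P x a y = (\<Sum>s\<in>UNIV. q s y * p (f x) a s)" for y
    by (simp add: P_bmdp_def sum.remove[of UNIV "f y"] q_supp)
  then have "(\<Sum>y\<in>UNIV. P x a y) = (\<Sum>y\<in>UNIV. \<Sum>s\<in>UNIV. q s y * p (f x) a s)"
    by simp
  also have "\<dots> = (\<Sum>s\<in>UNIV. (\<Sum>y\<in>UNIV. q s y) * p (f x) a s)"
    by (subst sum.swap) (simp add: sum_distrib_right)
  also have "\<dots> = 1"
    by (simp add: q_sum p_sum)
  finally show ?thesis .
qed

lemma sum_policy_step: "(\<Sum>a\<in>UNIV. \<Sum>y\<in>UNIV. \<pi> x a * P x a y) = 1"
  by (simp add: sum_distrib_left[symmetric] sum_P pi_sum)

lemma stochastic_P0: "stochastic (P0 f p q \<pi>)"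
proof -
  have "(\<Sum>y\<in>UNIV. P0 f p q \<pi> x y) = 1" for x
    unfolding P0_def by (subst sum.swap) (rule sum_policy_step)
  then show ?thesis
    by (auto simp: stochastic_def P0_def pi_nonneg P_nonneg intro!: sum_nonneg)
qed

lemma stochastic_P1: "stochastic (P1 f p q \<pi>)"
  unfolding stochastic_def P1_def
  by (auto simp: pi_nonneg P_nonneg sum_UNIV_prod sum_policy_step)

lemma P2sq_eq: "P2sq f p q \<pi> (x, a, x') (y, b, y') = P0 f p q \<pi> x' y * (\<pi> y b * P y b y')"
  unfolding P2sq_def P0_def sum_distrib_right by (simp add: mult_ac)

lemma stochastic_P2sq: "stochastic (P2sq f p q \<pi>)"
proof -
  have "(\<Sum>t\<in>UNIV. P2sq f p q \<pi> (x, a, x') t) = (\<Sum>y\<in>UNIV. P0 f p q \<pi> x' y)" for x a x'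
    by (simp add: sum_UNIV_prod P2sq_eq sum_distrib_left[symmetric] sum_P pi_sum)
  then show ?thesis
    using stochastic_P0
    by (auto simp: stochastic_def P2sq_eq pi_nonneg P_nonneg)
qed

lemma prob_vector_transition_triple:
  assumes "prob_vector w"
  shows "prob_vector (\<lambda>(x, a, x'). w x * (\<pi> x a * P x a x'))"
  using assms
  by (auto simp: prob_vector_def sum_UNIV_prod pi_nonneg P_nonneg sum_distrib_left[symmetric]
      sum_P pi_sum)

lemma prob_vector_mu2odd:
  assumes "prob_vector \<mu>"
  shows "prob_vector (mu2odd f p q \<pi> \<mu>)"
proof -
  have "mu2odd f p q \<pi> \<mu> = (\<lambda>(x, a, x'). \<mu> x * (\<pi> x a * P x a x'))"
    by (auto simp: mu2odd_def)
  then show ?thesis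
    using prob_vector_transition_triple[OF assms] by simp
qed

lemma prob_vector_mu2even:
  assumes "prob_vector \<mu>"
  shows "prob_vector (mu2even f p q \<pi> \<mu>)"
proof -
  have "mu2even f p q \<pi> \<mu> = (\<lambda>(x, a, x'). mc_step \<mu> (P0 f p q \<pi>) x * (\<pi> x a * P x a x'))"
    by (auto simp: mu2even_def mc_step_def P0_def sum_distrib_left mult_ac)
  then show ?thesis
    using prob_vector_transition_triple[OF prob_vector_mc_step[OF stochastic_P0 assms]] by simp
qed

lemma prob_vector_mu1:
  assumes "prob_vector \<mu>"
  shows "prob_vector (mu1 f p q \<pi> \<mu>)"
proof -
  define T where "T = (\<lambda>(x, a, x'). \<mu> x * (\<pi> x a * P x a x'))"
  have T: "prob_vector T"
    unfolding T_def using assms by (rule prob_vector_transition_triple)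
  have mu1_eq: "mu1 f p q \<pi> \<mu> z = (\<Sum>y\<in>UNIV. T (y, z))" for z
    by (simp add: mu1_def T_def case_prod_beta mult.assoc)
  have "(\<Sum>z\<in>UNIV. mu1 f p q \<pi> \<mu> z) = (\<Sum>y\<in>UNIV. \<Sum>z\<in>UNIV. T (y, z))"
    unfolding mu1_eq by (rule sum.swap)
  also have "\<dots> = 1"
    using T by (simp add: prob_vector_def sum_UNIV_prod[symmetric])
  finally show ?thesis
    using T by (auto simp: prob_vector_def mu1_eq intro!: sum_nonneg)
qed

context
  fixes \<eta> :: real
  assumes eta_nonneg: "0 \<le> \<eta>"
    and pi_ratio: "\<And>x y a. \<pi> x a \<le> \<eta> * \<pi> y a"
    and p_ratio: "\<And>s s' s'' a. p s' a s \<le> \<eta> * p s'' a s"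
begin

lemma policy_step_le: "\<pi> x a * P x a y \<le> \<eta>\<^sup>2 * (\<pi> x' a * P x' a y)"
proof -
  have "\<pi> x a * p (f x) a (f y) \<le> (\<eta> * \<pi> x' a) * (\<eta> * p (f x') a (f y))"
    by (intro mult_mono pi_ratio p_ratio) (auto simp: pi_nonneg p_nonneg eta_nonneg)
  then show ?thesis
    using q_nonneg[of "f y" y]
    by (auto simp: P_bmdp_def power2_eq_square mult_ac dest: mult_left_mono)
qed

lemma comparable_rows_P0: "comparable_rows (\<eta>\<^sup>2) (P0 f p q \<pi>)"
  unfolding comparable_rows_def P0_def sum_distrib_left by (intro allI sum_mono policy_step_le)

lemma comparable_rows_P1: "comparable_rows (\<eta>\<^sup>2) (P1 f p q \<pi>)"
  by (auto simp: comparable_rows_def P1_def policy_step_le)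

lemma comparable_rows_P2sq: "comparable_rows (\<eta>\<^sup>2) (P2sq f p q \<pi>)"
proof -
  have "P0 f p q \<pi> x' y * w \<le> \<eta>\<^sup>2 * (P0 f p q \<pi> z' y * w)" if "0 \<le> w" for x' z' y w
    using comparable_rows_P0 that unfolding comparable_rows_def by (metis mult.assoc mult_right_mono)
  then show ?thesis
    by (auto simp: comparable_rows_def P2sq_eq pi_nonneg P_nonneg mult_nonneg_nonneg)
qed

end

end

theorem proposition5:
  fixes f :: "'x::finite \<Rightarrow> 's::finite"
    and p :: "'s \<Rightarrow> 'a::finite \<Rightarrow> 's \<Rightarrow> real"
    and q :: "'s \<Rightarrow> 'x \<Rightarrow> real"
    and \<pi> :: "'x \<Rightarrow> 'a \<Rightarrow> real"
    and \<mu> :: "'x \<Rightarrow> real"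
    and \<eta> :: real
  assumes p_nonneg: "\<And>s a s'. 0 \<le> p s a s'"
    and p_sum: "\<And>s a. (\<Sum>s'\<in>UNIV. p s a s') = 1"
    and q_nonneg: "\<And>s x. 0 \<le> q s x"
    and q_sum: "\<And>s. (\<Sum>x\<in>UNIV. q s x) = 1"
    and q_supp: "\<And>s x. f x \<noteq> s \<Longrightarrow> q s x = 0"
    and pi_nonneg: "\<And>x a. 0 \<le> \<pi> x a"
    and pi_sum: "\<And>x. (\<Sum>a\<in>UNIV. \<pi> x a) = 1"
    and alpha_pos: "\<And>s. alpha f s > 0"
    \<comment> \<open>(A2)\<close>
    and eta_gt: "\<eta> > 1"
    and A2_alpha: "\<And>s1 s2. alpha f s1 \<le> \<eta> * alpha f s2"
    and A2_p1: "\<And>s1 s2 s3 a. p s1 a s2 \<le> \<eta> * p s1 a s3"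
    and A2_p2: "\<And>s1 s2 s3 a. p s2 a s1 \<le> \<eta> * p s3 a s1"
    and A2_q: "\<And>s x y. f x = s \<Longrightarrow> f y = s \<Longrightarrow> q s x \<le> \<eta> * q s y"
    and A2_pi: "\<And>a1 a2 x y. \<pi> x a1 \<le> \<eta> * \<pi> y a2"
    \<comment> \<open>(A3)\<close>
    and A3: "\<And>x. \<mu> x = 1 / real (card (UNIV :: 'x set))"
  shows "(\<forall>\<Pi>. stationary_dist (P0 f p q \<pi>) \<Pi> \<longrightarrow>
            mixing_time_finite \<mu> (P0 f p q \<pi>) \<Pi> \<and>
            real (mixing_time \<mu> (P0 f p q \<pi>) \<Pi>) \<le> 2 * \<eta>^2)
       \<and> (\<forall>\<Pi>. stationary_dist (P1 f p q \<pi>) \<Pi> \<longrightarrow>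
            mixing_time_finite (mu1 f p q \<pi> \<mu>) (P1 f p q \<pi>) \<Pi> \<and>
            real (mixing_time (mu1 f p q \<pi> \<mu>) (P1 f p q \<pi>) \<Pi>) \<le> 2 * \<eta>^2)
       \<and> (\<forall>\<Pi>. stationary_dist (P2sq f p q \<pi>) \<Pi> \<longrightarrow>
            mixing_time_finite (mu2odd f p q \<pi> \<mu>) (P2sq f p q \<pi>) \<Pi> \<and>
            real (mixing_time (mu2odd f p q \<pi> \<mu>) (P2sq f p q \<pi>) \<Pi>) \<le> \<eta>^2 + 1)
       \<and> (\<forall>\<Pi>. stationary_dist (P2sq f p q \<pi>) \<Pi> \<longrightarrow>
            mixing_time_finite (mu2even f p q \<pi> \<mu>) (P2sq f p q \<pi>) \<Pi> \<and>
            real (mixing_time (mu2even f p q \<pi> \<mu>) (P2sq f p q \<pi>) \<Pi>) \<le> \<eta>^2 + 1)"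
proof -
  interpret block_mdp f p q \<pi>
    using p_nonneg p_sum q_nonneg q_sum q_supp pi_nonneg pi_sum by unfold_locales
  have \<mu>: "prob_vector \<mu>"
    by (simp add: prob_vector_def A3)
  have "0 \<le> \<eta>" and c: "1 < \<eta>\<^sup>2"
    using eta_gt by (simp_all add: one_less_power)
  note comparable =
    comparable_rows_P0[OF \<open>0 \<le> \<eta>\<close> A2_pi A2_p2]
    comparable_rows_P1[OF \<open>0 \<le> \<eta>\<close> A2_pi A2_p2]
    comparable_rows_P2sq[OF \<open>0 \<le> \<eta>\<close> A2_pi A2_p2]
  have mixing: "\<forall>\<Pi>. stationary_dist Q \<Pi> \<longrightarrow>
      mixing_time_finite \<nu> Q \<Pi> \<and> real (mixing_time \<nu> Q \<Pi>) \<le> B"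
    if "stochastic Q" "comparable_rows (\<eta>\<^sup>2) Q" "prob_vector \<nu>" "\<eta>\<^sup>2 + 1 \<le> B"
    for Q :: "'st::finite \<Rightarrow> 'st \<Rightarrow> real" and \<nu> B
    using mixing_time_comparable_rows[OF that(1,2) c that(3)] that(4) by fastforce
  have "\<eta>\<^sup>2 + 1 \<le> 2 * \<eta>\<^sup>2"
    using c by simp
  then show ?thesis
    using mixing[OF stochastic_P0 comparable(1) \<mu>]
      mixing[OF stochastic_P1 comparable(2) prob_vector_mu1[OF \<mu>]]
      mixing[OF stochastic_P2sq comparable(3) prob_vector_mu2odd[OF \<mu>] order_refl]
      mixing[OF stochastic_P2sq comparable(3) prob_vector_mu2even[OF \<mu>] order_refl]
    by blast
qed

end
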